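(* Let $(X,\le)$ be a partially ordered set. Then a directed completion $(\overline X,\bar\le)$, $\iota:X\to\overline X$ of $X$ exists, and it is unique up to unique isomorphism. Moreover: (i) for every $x\in\overline X$ the set $\iota(X)\cap\downarrow x\subset\overline X$ has a tip, and this tip is $x$; (ii) for every dcpo $(Z,\le_Z)$ and every map $T:X\to Z$ with the Mcp, the unique map $\bar T:\overline X\to Z$ with the Mcp such that $\bar T\circ\iota=T$ is given by $$\bar T(\bar x)=\sup\{T(x):\ x\in X,\ \iota(x)\,\bar\le\,\bar x\}\qquad\forall\bar x\in\overline X,$$ where in particular this supremum exists in $Z$; (iii) an explicit realization is the following: let $Y:=\{A\subset X:\widehat A=A\}$ ordered by inclusion, let $\iota:X\to Y$, $\iota(x):=\downarrow x$, and let $\overline X$ be the directed-sup-closure of $\iota(X)$ computed in $Y$. With this choice, an element $A\in Y$ belongs to $\overline X$ if and only if the set $\{\iota(a):a\in A\}\subset Y$ has a tip in $Y$, and in this case this tip is $A$.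
   Context: Let $(X,\le)$ be a partially ordered set. A subset $D\subset X$ is directed if every finite subset of $D$ (including the empty one) has an upper bound in $D$; in particular directed sets are nonempty. $A\subset X$ is a lower set if $x\in A$ and $y\le x$ imply $y\in A$; $\downarrow A:=\{x\in X:x\le a\text{ for some }a\in A\}$ and $\downarrow a:=\downarrow\{a\}$. $(X,\le)$ is a directed complete partial order (dcpo) if every directed subset has a supremum. A subset $A\subset X$ is directed-sup-closed if the supremum of every directed $D\subset A$ which has a supremum in $X$ belongs to $A$. For $A\subset X$, $\overline A$ is the smallest directed-sup-closed subset of $X$ containing $A$, and $\widehat A$ is the smallest subset of $X$ containing $A$ which is both a lower set and directed-sup-closed. $A$ is dense if $\overline A=X$. $A$ has a tip if $\overline A$ has a maximum; this maximum is denoted ${\sf tip}\,A$. A map $T:X_1\to X_2$ between partially ordered sets has the Monotone Convergence Property (Mcp) if for every directed $D\subset X_1$ having a supremum, $T(D)$ has a supremum and $T(\sup D)=\sup T(D)$. A directed completion of $(X,\le)$ is a dcpo $(\overline X,\bar\le)$ together with a map $\iota:X\to\overline X$ with the Mcp such that for every dcpo $Z$ and every map $T:X\to Z$ with the Mcp there is a unique map $\bar T:\overline X\to Z$ with the Mcp satisfying $\bar T\circ\iota=T$. *)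

theory Defs
  imports Main
begin

definition poset :: "'a set \<Rightarrow> ('a \<Rightarrow> 'a \<Rightarrow> bool) \<Rightarrow> bool" where
  "poset X le \<longleftrightarrow> (\<forall>x\<in>X. le x x)
     \<and> (\<forall>x\<in>X. \<forall>y\<in>X. le x y \<and> le y x \<longrightarrow> x = y)
     \<and> (\<forall>x\<in>X. \<forall>y\<in>X. \<forall>z\<in>X. le x y \<and> le y z \<longrightarrow> le x z)"

text \<open>Directed: every finite subset (including the empty one) has an upper bound in D.\<close>
definition directed :: "'a set \<Rightarrow> ('a \<Rightarrow> 'a \<Rightarrow> bool) \<Rightarrow> 'a set \<Rightarrow> bool" where
  "directed X le D \<longleftrightarrow> D \<subseteq> X \<and>
     (\<forall>F. finite F \<and> F \<subseteq> D \<longrightarrow> (\<exists>u\<in>D. \<forall>f\<in>F. le f u))"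

definition is_sup :: "'a set \<Rightarrow> ('a \<Rightarrow> 'a \<Rightarrow> bool) \<Rightarrow> 'a set \<Rightarrow> 'a \<Rightarrow> bool" where
  "is_sup X le A s \<longleftrightarrow> s \<in> X \<and> (\<forall>a\<in>A. le a s) \<and>
     (\<forall>u\<in>X. (\<forall>a\<in>A. le a u) \<longrightarrow> le s u)"

definition has_sup :: "'a set \<Rightarrow> ('a \<Rightarrow> 'a \<Rightarrow> bool) \<Rightarrow> 'a set \<Rightarrow> bool" where
  "has_sup X le A \<longleftrightarrow> (\<exists>s. is_sup X le A s)"

definition dcpo :: "'a set \<Rightarrow> ('a \<Rightarrow> 'a \<Rightarrow> bool) \<Rightarrow> bool" where
  "dcpo X le \<longleftrightarrow> poset X le \<and> (\<forall>D. directed X le D \<longrightarrow> has_sup X le D)"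

definition lower_set :: "'a set \<Rightarrow> ('a \<Rightarrow> 'a \<Rightarrow> bool) \<Rightarrow> 'a set \<Rightarrow> bool" where
  "lower_set X le A \<longleftrightarrow> A \<subseteq> X \<and> (\<forall>x\<in>A. \<forall>y\<in>X. le y x \<longrightarrow> y \<in> A)"

definition down :: "'a set \<Rightarrow> ('a \<Rightarrow> 'a \<Rightarrow> bool) \<Rightarrow> 'a set \<Rightarrow> 'a set" where
  "down X le A = {x \<in> X. \<exists>a\<in>A. le x a}"

definition dsup_closed :: "'a set \<Rightarrow> ('a \<Rightarrow> 'a \<Rightarrow> bool) \<Rightarrow> 'a set \<Rightarrow> bool" where
  "dsup_closed X le A \<longleftrightarrow> A \<subseteq> X \<and>
     (\<forall>D s. directed X le D \<and> D \<subseteq> A \<and> is_sup X le D s \<longrightarrow> s \<in> A)"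

definition dclosure :: "'a set \<Rightarrow> ('a \<Rightarrow> 'a \<Rightarrow> bool) \<Rightarrow> 'a set \<Rightarrow> 'a set" where
  "dclosure X le A = \<Inter> {B. A \<subseteq> B \<and> dsup_closed X le B}"

text \<open>Smallest lower, directed-sup-closed subset of X containing A (widehat A).\<close>
definition hclosure :: "'a set \<Rightarrow> ('a \<Rightarrow> 'a \<Rightarrow> bool) \<Rightarrow> 'a set \<Rightarrow> 'a set" where
  "hclosure X le A = \<Inter> {B. A \<subseteq> B \<and> lower_set X le B \<and> dsup_closed X le B}"

definition is_tip :: "'a set \<Rightarrow> ('a \<Rightarrow> 'a \<Rightarrow> bool) \<Rightarrow> 'a set \<Rightarrow> 'a \<Rightarrow> bool" where
  "is_tip X le A t \<longleftrightarrow> t \<in> dclosure X le A \<and> (\<forall>y\<in>dclosure X le A. le y t)"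

definition has_tip :: "'a set \<Rightarrow> ('a \<Rightarrow> 'a \<Rightarrow> bool) \<Rightarrow> 'a set \<Rightarrow> bool" where
  "has_tip X le A \<longleftrightarrow> (\<exists>t. is_tip X le A t)"

definition mcp :: "'a set \<Rightarrow> ('a \<Rightarrow> 'a \<Rightarrow> bool) \<Rightarrow> 'b set \<Rightarrow> ('b \<Rightarrow> 'b \<Rightarrow> bool)
    \<Rightarrow> ('a \<Rightarrow> 'b) \<Rightarrow> bool" where
  "mcp X1 le1 X2 le2 T \<longleftrightarrow> (\<forall>x\<in>X1. T x \<in> X2) \<and>
     (\<forall>D s. directed X1 le1 D \<and> is_sup X1 le1 D s \<longrightarrow> is_sup X2 le2 (T ` D) (T s))"

text \<open>Directed completion, with the universal property required for all dcpos
whose carrier lives in the type 'z (HOL cannot quantify over types inside a formula).\<close>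
definition dcompl :: "'z itself \<Rightarrow> 'a set \<Rightarrow> ('a \<Rightarrow> 'a \<Rightarrow> bool)
    \<Rightarrow> 'b set \<Rightarrow> ('b \<Rightarrow> 'b \<Rightarrow> bool) \<Rightarrow> ('a \<Rightarrow> 'b) \<Rightarrow> bool" where
  "dcompl (_::'z itself) X le Xb leb \<iota> \<longleftrightarrow> dcpo Xb leb \<and> mcp X le Xb leb \<iota> \<and>
     (\<forall>(Z::'z set) leZ T. dcpo Z leZ \<and> mcp X le Z leZ T \<longrightarrow>
        (\<exists>Tb. mcp Xb leb Z leZ Tb \<and> (\<forall>x\<in>X. Tb (\<iota> x) = T x) \<and>
           (\<forall>Tb'. mcp Xb leb Z leZ Tb' \<and> (\<forall>x\<in>X. Tb' (\<iota> x) = T x)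
                 \<longrightarrow> (\<forall>y\<in>Xb. Tb' y = Tb y))))"

definition order_iso :: "'a set \<Rightarrow> ('a \<Rightarrow> 'a \<Rightarrow> bool) \<Rightarrow> 'b set \<Rightarrow> ('b \<Rightarrow> 'b \<Rightarrow> bool)
    \<Rightarrow> ('a \<Rightarrow> 'b) \<Rightarrow> bool" where
  "order_iso X1 le1 X2 le2 f \<longleftrightarrow> bij_betw f X1 X2 \<and>
     (\<forall>x\<in>X1. \<forall>y\<in>X1. le1 x y \<longleftrightarrow> le2 (f x) (f y))"

definition realY :: "'a set \<Rightarrow> ('a \<Rightarrow> 'a \<Rightarrow> bool) \<Rightarrow> 'a set set" where
  "realY X le = {A. A \<subseteq> X \<and> hclosure X le A = A}"

definition real_iota :: "'a set \<Rightarrow> ('a \<Rightarrow> 'a \<Rightarrow> bool) \<Rightarrow> 'a \<Rightarrow> 'a set" where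
  "real_iota X le x = down X le {x}"

definition realXb :: "'a set \<Rightarrow> ('a \<Rightarrow> 'a \<Rightarrow> bool) \<Rightarrow> 'a set set" where
  "realXb X le = dclosure (realY X le) (\<subseteq>) (real_iota X le ` X)"

end

theory Submission
  imports Defs
begin

text \<open>
  The lower, directed-sup-closed subsets of \<open>X\<close> form a complete lattice \<open>realY\<close>
  whose suprema are hulls of unions, and \<open>X\<close> embeds into it by principal down sets.  A map \<open>T\<close>
  with the Mcp extends to the dsup-closure \<open>realXb\<close> of the image by \<open>A \<mapsto> sup T(A)\<close>: these
  suprema exist at principal down sets, and they propagate along directed suprema because
  passing from a union to its hull does not change the supremum of the image.

  For an arbitrary directed completion, the universal property applied to the dsup-closure of
  \<open>\<iota>(X)\<close> shows that \<open>\<iota>(X)\<close> is dense.  Closure induction then makes every point the tip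
  of the points of \<open>\<iota>(X)\<close> below it, and an Mcp map sends a tip to the supremum of the image,
  which is the formula (ii).
\<close>

section \<open>Suprema, directed sets and closures\<close>

lemma poset_refl: "poset P le \<Longrightarrow> x \<in> P \<Longrightarrow> le x x"
  unfolding poset_def by (elim conjE) metis

lemma poset_antisym: "poset P le \<Longrightarrow> x \<in> P \<Longrightarrow> y \<in> P \<Longrightarrow> le x y \<Longrightarrow> le y x \<Longrightarrow> x = y"
  unfolding poset_def by (elim conjE) metis

lemma poset_trans:
  "poset P le \<Longrightarrow> x \<in> P \<Longrightarrow> y \<in> P \<Longrightarrow> z \<in> P \<Longrightarrow> le x y \<Longrightarrow> le y z \<Longrightarrow> le x z"
  unfolding poset_def by (elim conjE) metis

lemma poset_subset: "poset P le \<Longrightarrow> B \<subseteq> P \<Longrightarrow> poset B le"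
  unfolding poset_def by (elim conjE) (meson subsetD)

lemma dcpo_poset: "dcpo P le \<Longrightarrow> poset P le"
  unfolding dcpo_def by blast

lemma dcpo_has_sup: "dcpo P le \<Longrightarrow> directed P le D \<Longrightarrow> has_sup P le D"
  unfolding dcpo_def by blast

lemma is_sup_mem: "is_sup P le D s \<Longrightarrow> s \<in> P"
  and is_sup_upper: "is_sup P le D s \<Longrightarrow> d \<in> D \<Longrightarrow> le d s"
  and is_sup_least: "is_sup P le D s \<Longrightarrow> u \<in> P \<Longrightarrow> (\<And>d. d \<in> D \<Longrightarrow> le d u) \<Longrightarrow> le s u"
  unfolding is_sup_def by blast+

lemma is_sup_unique: "poset P le \<Longrightarrow> is_sup P le D s \<Longrightarrow> is_sup P le D t \<Longrightarrow> s = t"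
  unfolding is_sup_def by (metis poset_antisym)

lemma is_sup_subset: "is_sup P le D s \<Longrightarrow> s \<in> B \<Longrightarrow> B \<subseteq> P \<Longrightarrow> is_sup B le D s"
  unfolding is_sup_def by blast

lemma is_sup_mono:
  "A \<subseteq> B \<Longrightarrow> is_sup P le A a \<Longrightarrow> is_sup P le B b \<Longrightarrow> le a b"
  unfolding is_sup_def by blast

text \<open>A choice of supremum; it is meaningful only when the supremum exists.\<close>
definition sup_of :: "'a set \<Rightarrow> ('a \<Rightarrow> 'a \<Rightarrow> bool) \<Rightarrow> 'a set \<Rightarrow> 'a" where
  "sup_of P le A = (SOME s. is_sup P le A s)"

lemma is_sup_sup_of: "is_sup P le A s \<Longrightarrow> is_sup P le A (sup_of P le A)"
  unfolding sup_of_def by (rule someI)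

lemma sup_of_eq: "poset P le \<Longrightarrow> is_sup P le A s \<Longrightarrow> sup_of P le A = s"
  by (metis is_sup_sup_of is_sup_unique)

lemma is_sup_UN:
  assumes "poset P le" "\<And>i. i \<in> I \<Longrightarrow> F i \<subseteq> P" "\<And>i. i \<in> I \<Longrightarrow> is_sup P le (F i) (s i)"
    "is_sup P le (s ` I) z"
  shows "is_sup P le (\<Union>i\<in>I. F i) z"
  unfolding is_sup_def
proof (intro conjI ballI impI)
  show "z \<in> P" using assms(4) by (rule is_sup_mem)
next
  fix a assume "a \<in> (\<Union>i\<in>I. F i)"
  then obtain i where i: "i \<in> I" "a \<in> F i" by blast
  have "le a (s i)" "le (s i) z"
    using is_sup_upper[OF assms(3)[OF i(1)] i(2)] is_sup_upper[OF assms(4) imageI[OF i(1)]] .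
  then show "le a z"
    using poset_trans[OF assms(1)] assms(2)[OF i(1)] i(2)
      is_sup_mem[OF assms(3)[OF i(1)]] is_sup_mem[OF assms(4)] by blast
next
  fix u assume u: "u \<in> P" "\<forall>a\<in>(\<Union>i\<in>I. F i). le a u"
  show "le z u"
    using is_sup_least[OF assms(4) u(1)] is_sup_least[OF assms(3) u(1)] u(2) by blast
qed

lemma directedD: "directed P le D \<Longrightarrow> D \<subseteq> P"
  unfolding directed_def by blast

lemma directed_subset: "directed P le D \<Longrightarrow> D \<subseteq> B \<Longrightarrow> directed B le D"
  and directed_superset: "directed B le D \<Longrightarrow> B \<subseteq> P \<Longrightarrow> directed P le D"
  unfolding directed_def by blast+

lemma directed_image:
  assumes "directed P le D" "\<And>x. x \<in> D \<Longrightarrow> f x \<in> Q"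
    "\<And>x y. x \<in> D \<Longrightarrow> y \<in> D \<Longrightarrow> le x y \<Longrightarrow> leQ (f x) (f y)"
  shows "directed Q leQ (f ` D)"
  unfolding directed_def
proof (intro conjI allI impI)
  show "f ` D \<subseteq> Q" using assms(2) by blast
next
  fix F assume "finite F \<and> F \<subseteq> f ` D"
  then obtain G where G: "G \<subseteq> D" "finite G" "F = f ` G" by (meson finite_subset_image)
  then obtain u where "u \<in> D" "\<forall>g\<in>G. le g u" using assms(1) unfolding directed_def by blast
  then show "\<exists>v\<in>f ` D. \<forall>w\<in>F. leQ w v" using G assms(3) by blast
qed

lemma directed_pair: "poset P le \<Longrightarrow> x \<in> P \<Longrightarrow> y \<in> P \<Longrightarrow> le x y \<Longrightarrow> directed P le {x, y}"
  and is_sup_pair: "poset P le \<Longrightarrow> x \<in> P \<Longrightarrow> y \<in> P \<Longrightarrow> le x y \<Longrightarrow> is_sup P le {x, y} y"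
  unfolding directed_def is_sup_def by (auto dest: poset_refl)

lemma down_singleton_iff: "y \<in> down P le {x} \<longleftrightarrow> y \<in> P \<and> le y x"
  unfolding down_def by simp

lemma dsup_closed_down_singleton: "t \<in> P \<Longrightarrow> dsup_closed P le (down P le {t})"
  unfolding dsup_closed_def down_def is_sup_def by blast

lemma lower_set_down_singleton:
  assumes "poset P le" "t \<in> P"
  shows "lower_set P le (down P le {t})"
  unfolding lower_set_def
proof (intro conjI ballI impI)
  fix x y assume "x \<in> down P le {t}" "y \<in> P" "le y x"
  then show "y \<in> down P le {t}"
    using poset_trans[OF assms(1) _ _ assms(2)] by (simp add: down_singleton_iff) blast
qed (auto simp: down_singleton_iff)

lemma dsup_closedD:
  "dsup_closed P le B \<Longrightarrow> directed P le D \<Longrightarrow> D \<subseteq> B \<Longrightarrow> is_sup P le D s \<Longrightarrow> s \<in> B"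
  unfolding dsup_closed_def by blast

lemma dsup_closed_carrier: "dsup_closed P le P"
  unfolding dsup_closed_def is_sup_def by blast

lemma dsup_closed_subset: "dsup_closed P le B \<Longrightarrow> B \<subseteq> P"
  unfolding dsup_closed_def by blast

lemma dcpo_dsup_closed_is_sup:
  assumes "dcpo P le" "dsup_closed P le B" "directed P le D" "D \<subseteq> B"
  shows "\<exists>s\<in>B. is_sup P le D s \<and> is_sup B le D s"
proof -
  obtain s where s: "is_sup P le D s"
    using dcpo_has_sup[OF assms(1,3)] unfolding has_sup_def by blast
  have "s \<in> B" by (rule dsup_closedD[OF assms(2,3,4) s])
  with s show ?thesis using is_sup_subset[OF s _ dsup_closed_subset[OF assms(2)]] by blast
qed

lemma dcpo_dsup_closed:
  assumes "dcpo P le" "dsup_closed P le B"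
  shows "dcpo B le"
proof -
  have "has_sup B le D" if "directed B le D" for D
    using dcpo_dsup_closed_is_sup[OF assms directed_superset[OF that dsup_closed_subset[OF assms(2)]]
        directedD[OF that]]
    unfolding has_sup_def by blast
  then show ?thesis
    unfolding dcpo_def
    using poset_subset[OF dcpo_poset[OF assms(1)] dsup_closed_subset[OF assms(2)]] by blast
qed

lemma dclosure_subset: "A \<subseteq> dclosure P le A"
  unfolding dclosure_def by blast

lemma dclosure_minimal: "A \<subseteq> B \<Longrightarrow> dsup_closed P le B \<Longrightarrow> dclosure P le A \<subseteq> B"
  unfolding dclosure_def by blast

lemma dclosure_subset_carrier: "A \<subseteq> P \<Longrightarrow> dclosure P le A \<subseteq> P"
  by (rule dclosure_minimal[OF _ dsup_closed_carrier])

lemma dsup_closed_dclosure: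
  assumes "A \<subseteq> P"
  shows "dsup_closed P le (dclosure P le A)"
  unfolding dsup_closed_def
proof (intro conjI allI impI)
  show "dclosure P le A \<subseteq> P" using assms by (rule dclosure_subset_carrier)
next
  fix D s assume "directed P le D \<and> D \<subseteq> dclosure P le A \<and> is_sup P le D s"
  then show "s \<in> dclosure P le A"
    unfolding dclosure_def by (blast intro: dsup_closedD)
qed

lemma dclosure_mono: "A \<subseteq> B \<Longrightarrow> B \<subseteq> P \<Longrightarrow> dclosure P le A \<subseteq> dclosure P le B"
  by (meson dsup_closed_dclosure dclosure_minimal dclosure_subset order_trans)

lemma dclosure_induct [consumes 2, case_names base sup]:
  assumes "x \<in> dclosure P le A" "A \<subseteq> P"
    and base: "\<And>a. a \<in> A \<Longrightarrow> Q a"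
    and sup: "\<And>D s. directed P le D \<Longrightarrow> D \<subseteq> dclosure P le A \<Longrightarrow> \<forall>d\<in>D. Q d
      \<Longrightarrow> is_sup P le D s \<Longrightarrow> Q s"
  shows "Q x"
proof -
  let ?B = "{x \<in> dclosure P le A. Q x}"
  have "dsup_closed P le ?B"
    unfolding dsup_closed_def
  proof (intro conjI allI impI)
    show "?B \<subseteq> P" using dclosure_subset_carrier[OF assms(2)] by blast
  next
    fix D s assume "directed P le D \<and> D \<subseteq> ?B \<and> is_sup P le D s"
    then show "s \<in> ?B"
      using dsup_closedD[OF dsup_closed_dclosure[OF assms(2)]] sup[of D s] by blast
  qed
  moreover have "A \<subseteq> ?B" using dclosure_subset[of A P le] base by blast
  ultimately have "dclosure P le A \<subseteq> ?B" by (rule dclosure_minimal[rotated])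
  then show ?thesis using assms(1) by blast
qed

lemma hclosure_subset: "A \<subseteq> hclosure P le A"
  unfolding hclosure_def by blast

lemma hclosure_minimal:
  "A \<subseteq> B \<Longrightarrow> lower_set P le B \<Longrightarrow> dsup_closed P le B \<Longrightarrow> hclosure P le A \<subseteq> B"
  unfolding hclosure_def by blast

lemma hclosure_subset_carrier: "A \<subseteq> P \<Longrightarrow> hclosure P le A \<subseteq> P"
  by (rule hclosure_minimal[OF _ _ dsup_closed_carrier]) (auto simp: lower_set_def)

lemma lower_set_hclosure:
  assumes "A \<subseteq> P"
  shows "lower_set P le (hclosure P le A)"
  using hclosure_subset_carrier[OF assms] unfolding lower_set_def hclosure_def by blast

lemma dsup_closed_hclosure:
  assumes "A \<subseteq> P"
  shows "dsup_closed P le (hclosure P le A)"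
  unfolding dsup_closed_def
proof (intro conjI allI impI)
  show "hclosure P le A \<subseteq> P" using assms by (rule hclosure_subset_carrier)
next
  fix D s assume "directed P le D \<and> D \<subseteq> hclosure P le A \<and> is_sup P le D s"
  then show "s \<in> hclosure P le A"
    unfolding hclosure_def by (blast intro: dsup_closedD)
qed

lemma is_tipI_down:
  assumes "t \<in> P" "S \<subseteq> down P le {t}" "t \<in> dclosure P le S"
  shows "is_tip P le S t"
  using dclosure_minimal[OF assms(2) dsup_closed_down_singleton[OF assms(1)]] assms(3)
  unfolding is_tip_def down_def by blast

lemma mem_dclosure_monotone_family:
  assumes "x \<in> dclosure P le A" "A \<subseteq> P"
    and "\<And>a. a \<in> P \<Longrightarrow> S a \<subseteq> P"
    and "\<And>a. a \<in> A \<Longrightarrow> a \<in> S a"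
    and "\<And>a b. a \<in> P \<Longrightarrow> b \<in> P \<Longrightarrow> le a b \<Longrightarrow> S a \<subseteq> S b"
  shows "x \<in> dclosure P le (S x)"
  using assms(1,2)
proof (induction rule: dclosure_induct)
  case (base a)
  then show ?case using assms(4) dclosure_subset[of "S a" P le] by blast
next
  case (sup D s)
  have sP: "s \<in> P" using sup.hyps(3) by (rule is_sup_mem)
  have "D \<subseteq> dclosure P le (S s)"
  proof
    fix d assume d: "d \<in> D"
    have "d \<in> P" using directedD[OF sup.hyps(1)] d by blast
    then have "S d \<subseteq> S s" using assms(5) sP is_sup_upper[OF sup.hyps(3) d] by blast
    then have "dclosure P le (S d) \<subseteq> dclosure P le (S s)"
      using assms(3)[OF sP] by (rule dclosure_mono)
    then show "d \<in> dclosure P le (S s)" using sup.IH d by blast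
  qed
  then show ?case
    using dsup_closedD[OF dsup_closed_dclosure[OF assms(3)[OF sP]] sup.hyps(1) _ sup.hyps(3)]
    by blast
qed

section \<open>Maps with the monotone convergence property\<close>

lemma mcpI:
  "(\<And>x. x \<in> P \<Longrightarrow> f x \<in> Q)
    \<Longrightarrow> (\<And>D s. directed P le D \<Longrightarrow> is_sup P le D s \<Longrightarrow> is_sup Q leQ (f ` D) (f s))
    \<Longrightarrow> mcp P le Q leQ f"
  unfolding mcp_def by blast

lemma mcp_mem: "mcp P le Q leQ f \<Longrightarrow> x \<in> P \<Longrightarrow> f x \<in> Q"
  unfolding mcp_def by blast

lemma mcp_is_sup:
  "mcp P le Q leQ f \<Longrightarrow> directed P le D \<Longrightarrow> is_sup P le D s \<Longrightarrow> is_sup Q leQ (f ` D) (f s)"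
  unfolding mcp_def by blast

lemma mcp_mono:
  assumes "poset P le" "mcp P le Q leQ f" "x \<in> P" "y \<in> P" "le x y"
  shows "leQ (f x) (f y)"
  using mcp_is_sup[OF assms(2) directed_pair[OF assms(1,3-5)] is_sup_pair[OF assms(1,3-5)]]
  by (rule is_sup_upper) simp

lemma mcp_comp:
  assumes "poset P le" "mcp P le Q leQ f" "mcp Q leQ R leR g"
  shows "mcp P le R leR (g \<circ> f)"
proof (rule mcpI)
  fix x assume "x \<in> P"
  then show "(g \<circ> f) x \<in> R" using mcp_mem[OF assms(3) mcp_mem[OF assms(2)]] by simp
next
  fix D s assume D: "directed P le D" "is_sup P le D s"
  have DP: "D \<subseteq> P" using D(1) by (rule directedD)
  have "directed Q leQ (f ` D)"
  proof (rule directed_image[OF D(1)])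
    fix x assume "x \<in> D"
    then show "f x \<in> Q" using DP mcp_mem[OF assms(2)] by blast
  next
    fix x y assume "x \<in> D" "y \<in> D" "le x y"
    then show "leQ (f x) (f y)" using DP mcp_mono[OF assms(1,2)] by blast
  qed
  then have "is_sup R leR (g ` f ` D) (g (f s))"
    using mcp_is_sup[OF assms(3) _ mcp_is_sup[OF assms(2) D]] by blast
  then show "is_sup R leR ((g \<circ> f) ` D) ((g \<circ> f) s)" by (simp add: image_comp)
qed

lemma mcp_id: "mcp P le P le (\<lambda>x. x)"
  by (rule mcpI) simp_all

lemma mcp_restrict_codomain:
  "mcp P le Q leQ f \<Longrightarrow> f ` P \<subseteq> B \<Longrightarrow> B \<subseteq> Q \<Longrightarrow> mcp P le B leQ f"
  unfolding mcp_def by (metis image_subset_iff is_sup_def is_sup_subset)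

lemma mcp_dsup_closed_inclusion:
  assumes "dcpo P le" "dsup_closed P le B"
  shows "mcp B le P le (\<lambda>x. x)"
proof (rule mcpI)
  show "x \<in> P" if "x \<in> B" for x using that dsup_closed_subset[OF assms(2)] by blast
next
  fix D s assume D: "directed B le D" "is_sup B le D s"
  obtain t where "is_sup P le D t" "is_sup B le D t"
    using dcpo_dsup_closed_is_sup[OF assms directed_superset[OF D(1) dsup_closed_subset[OF assms(2)]]
        directedD[OF D(1)]] by blast
  moreover have "s = t"
    using dcpo_poset[OF dcpo_dsup_closed[OF assms]] D(2) calculation(2) by (rule is_sup_unique)
  ultimately show "is_sup P le ((\<lambda>x. x) ` D) s" by simp
qed

lemma order_iso_mcp:
  assumes "order_iso P le Q leQ f"
  shows "mcp P le Q leQ f"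
proof -
  have im: "f ` P = Q" and ord: "\<And>x y. x \<in> P \<Longrightarrow> y \<in> P \<Longrightarrow> le x y \<longleftrightarrow> leQ (f x) (f y)"
    using assms unfolding order_iso_def bij_betw_def by blast+
  show ?thesis
  proof (rule mcpI)
    show "f x \<in> Q" if "x \<in> P" for x using im that by blast
  next
    fix D s assume D: "directed P le D" "is_sup P le D s"
    have DP: "D \<subseteq> P" and sP: "s \<in> P" using directedD[OF D(1)] is_sup_mem[OF D(2)] .
    show "is_sup Q leQ (f ` D) (f s)"
      unfolding is_sup_def
    proof (intro conjI ballI impI)
      show "f s \<in> Q" using im sP by blast
    next
      fix a assume "a \<in> f ` D"
      then show "leQ a (f s)" using DP sP ord is_sup_upper[OF D(2)] by blast
    next
      fix u assume u: "u \<in> Q" "\<forall>a\<in>f ` D. leQ a u"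
      then obtain v where v: "v \<in> P" "u = f v" using im by blast
      have "le s v" using is_sup_least[OF D(2) v(1)] u(2) v DP ord by blast
      then show "leQ (f s) u" using ord sP v by blast
    qed
  qed
qed

lemma order_iso_mcp_inverse:
  assumes "poset P le" "poset Q leQ" "mcp P le Q leQ f" "mcp Q leQ P le g"
    "\<And>x. x \<in> P \<Longrightarrow> g (f x) = x" "\<And>y. y \<in> Q \<Longrightarrow> f (g y) = y"
  shows "order_iso P le Q leQ f"
  unfolding order_iso_def
proof (intro conjI ballI)
  show "bij_betw f P Q"
    by (rule bij_betw_byWitness[where f' = g]) (use assms(5,6) mcp_mem[OF assms(3)] mcp_mem[OF assms(4)] in auto)
next
  fix x y assume xy: "x \<in> P" "y \<in> P"
  show "le x y \<longleftrightarrow> leQ (f x) (f y)"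
  proof
    assume "le x y" then show "leQ (f x) (f y)" by (rule mcp_mono[OF assms(1,3) xy])
  next
    assume "leQ (f x) (f y)"
    then have "le (g (f x)) (g (f y))"
      by (rule mcp_mono[OF assms(2,4) mcp_mem[OF assms(3) xy(1)] mcp_mem[OF assms(3) xy(2)]])
    then show "le x y" using assms(5) xy by simp
  qed
qed

lemma dsup_closed_mcp_below:
  assumes "mcp P le Q leQ f" "u \<in> Q"
  shows "dsup_closed P le {y \<in> P. leQ (f y) u}"
  unfolding dsup_closed_def
proof (intro conjI allI impI)
  fix D s assume "directed P le D \<and> D \<subseteq> {y \<in> P. leQ (f y) u} \<and> is_sup P le D s"
  then have D: "directed P le D" "\<And>d. d \<in> D \<Longrightarrow> leQ (f d) u" "is_sup P le D s" by blast+
  have "leQ (f s) u"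
    using mcp_is_sup[OF assms(1) D(1,3)] assms(2) by (rule is_sup_least) (auto intro: D(2))
  then show "s \<in> {y \<in> P. leQ (f y) u}" using is_sup_mem[OF D(3)] by blast
qed blast

lemma lower_set_mcp_below:
  assumes "poset P le" "poset Q leQ" "mcp P le Q leQ f" "u \<in> Q"
  shows "lower_set P le {y \<in> P. leQ (f y) u}"
  unfolding lower_set_def
proof (intro conjI ballI impI)
  fix x y assume x: "x \<in> {y \<in> P. leQ (f y) u}" and y: "y \<in> P" "le y x"
  then have "leQ (f y) (f x)" using mcp_mono[OF assms(1,3)] by blast
  then show "y \<in> {y \<in> P. leQ (f y) u}"
    using x y poset_trans[OF assms(2) mcp_mem[OF assms(3)] mcp_mem[OF assms(3)] assms(4)] by blast
qed blast

lemma mcp_is_sup_tip: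
  assumes "poset P le" "mcp P le Q leQ f" "is_tip P le S t" "S \<subseteq> P"
  shows "is_sup Q leQ (f ` S) (f t)"
  unfolding is_sup_def
proof (intro conjI ballI impI)
  have t: "t \<in> dclosure P le S" "\<And>y. y \<in> dclosure P le S \<Longrightarrow> le y t"
    using assms(3) unfolding is_tip_def by blast+
  have tP: "t \<in> P" using t(1) dclosure_subset_carrier[OF assms(4)] by blast
  show "f t \<in> Q" using tP by (rule mcp_mem[OF assms(2)])
  show "leQ a (f t)" if "a \<in> f ` S" for a
  proof -
    obtain s where s: "s \<in> S" "a = f s" using \<open>a \<in> f ` S\<close> by blast
    have "le s t" using t(2) dclosure_subset[of S P le] s(1) by blast
    then show ?thesis using mcp_mono[OF assms(1,2) _ tP] s assms(4) by blast
  qed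
  show "leQ (f t) u" if "u \<in> Q" "\<forall>a\<in>f ` S. leQ a u" for u
  proof -
    have "S \<subseteq> {y \<in> P. leQ (f y) u}" using that(2) assms(4) by blast
    then have "dclosure P le S \<subseteq> {y \<in> P. leQ (f y) u}"
      using dsup_closed_mcp_below[OF assms(2) that(1)] by (rule dclosure_minimal)
    then show ?thesis using t(1) by blast
  qed
qed

lemma mcp_eq_on_dclosure:
  assumes "poset Q leQ" "dsup_closed P le B" "A \<subseteq> B"
    "mcp B le Q leQ f" "mcp B le Q leQ g" "\<And>a. a \<in> A \<Longrightarrow> f a = g a"
    "y \<in> dclosure P le A"
  shows "f y = g y"
proof -
  have BP: "B \<subseteq> P" using assms(2) by (rule dsup_closed_subset)
  have clB: "dclosure P le A \<subseteq> B" using assms(3,2) by (rule dclosure_minimal)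
  have AP: "A \<subseteq> P" using assms(3) BP by blast
  from assms(7) AP show ?thesis
  proof (induction rule: dclosure_induct)
    case (sup D s)
    have DB: "D \<subseteq> B" using sup.hyps(2) clB by blast
    have sB: "s \<in> B" using assms(2) sup.hyps(1) DB sup.hyps(3) by (rule dsup_closedD)
    have dir: "directed B le D" using sup.hyps(1) DB by (rule directed_subset)
    have sup_s: "is_sup B le D s" using sup.hyps(3) sB BP by (rule is_sup_subset)
    have "f ` D = g ` D" using sup.IH by simp
    then have "is_sup Q leQ (f ` D) (g s)" using mcp_is_sup[OF assms(5) dir sup_s] by simp
    then show ?case by (rule is_sup_unique[OF assms(1) mcp_is_sup[OF assms(4) dir sup_s]])
  qed (rule assms(6))
qed

lemma is_sup_image_down_singleton:
  assumes "poset P le" "mcp P le Q leQ f" "x \<in> P"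
  shows "is_sup Q leQ (f ` down P le {x}) (f x)"
  unfolding is_sup_def
proof (intro conjI ballI impI)
  show "f x \<in> Q" using assms(2,3) by (rule mcp_mem)
  show "leQ a (f x)" if "a \<in> f ` down P le {x}" for a
    using that mcp_mono[OF assms(1,2) _ assms(3)] by (auto simp: down_singleton_iff)
  show "leQ (f x) u" if "\<forall>a\<in>f ` down P le {x}. leQ a u" for u
    using that poset_refl[OF assms(1,3)] assms(3) by (auto simp: down_singleton_iff)
qed

text \<open>The points mapped below a bound form a lower, directed-sup-closed set.\<close>

lemma is_sup_image_hclosure:
  assumes "poset P le" "poset Q leQ" "mcp P le Q leQ f" "B \<subseteq> P" "is_sup Q leQ (f ` B) z"
  shows "is_sup Q leQ (f ` hclosure P le B) z"
  unfolding is_sup_def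
proof (intro conjI ballI impI)
  have zQ: "z \<in> Q" using assms(5) by (rule is_sup_mem)
  then show "z \<in> Q" .
  have "hclosure P le B \<subseteq> {y \<in> P. leQ (f y) z}"
  proof (rule hclosure_minimal)
    show "B \<subseteq> {y \<in> P. leQ (f y) z}" using assms(4) is_sup_upper[OF assms(5)] by blast
  qed (use lower_set_mcp_below[OF assms(1-3) zQ] dsup_closed_mcp_below[OF assms(3) zQ] in simp_all)
  then show "leQ a z" if "a \<in> f ` hclosure P le B" for a using that by blast
  show "leQ z u" if "u \<in> Q" "\<forall>a\<in>f ` hclosure P le B. leQ a u" for u
    using is_sup_least[OF assms(5) that(1)] that(2) hclosure_subset[of B P le] by blast
qed

section \<open>Directed completions\<close>

lemma dcompl_dcpo: "dcompl TYPE('z) X le Xb leb \<iota> \<Longrightarrow> dcpo Xb leb"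
  and dcompl_mcp: "dcompl TYPE('z) X le Xb leb \<iota> \<Longrightarrow> mcp X le Xb leb \<iota>"
  unfolding dcompl_def by blast+

lemma dcompl_extension:
  fixes Z :: "'z set"
  assumes "dcompl TYPE('z) X le Xb leb \<iota>" "dcpo Z leZ" "mcp X le Z leZ T"
  obtains Tb where "mcp Xb leb Z leZ Tb" "\<And>x. x \<in> X \<Longrightarrow> Tb (\<iota> x) = T x"
  using assms unfolding dcompl_def by blast

lemma dcompl_extension_unique:
  fixes Z :: "'z set"
  assumes "dcompl TYPE('z) X le Xb leb \<iota>" "dcpo Z leZ" "mcp X le Z leZ T"
    "mcp Xb leb Z leZ f" "\<And>x. x \<in> X \<Longrightarrow> f (\<iota> x) = T x"
    "mcp Xb leb Z leZ g" "\<And>x. x \<in> X \<Longrightarrow> g (\<iota> x) = T x"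
    "y \<in> Xb"
  shows "f y = g y"
proof -
  obtain Tb where Tb: "\<forall>Tb'. mcp Xb leb Z leZ Tb' \<and> (\<forall>x\<in>X. Tb' (\<iota> x) = T x)
      \<longrightarrow> (\<forall>y\<in>Xb. Tb' y = Tb y)"
    using assms(1-3) unfolding dcompl_def by blast
  have "f y = Tb y" and "g y = Tb y" using Tb assms(4-8) by blast+
  then show ?thesis by simp
qed

lemma dcompl_eq_on_image:
  fixes Z :: "'z set"
  assumes "poset X le" "dcompl TYPE('z) X le Xb leb \<iota>" "dcpo Z leZ"
    "mcp Xb leb Z leZ f" "mcp Xb leb Z leZ g" "\<And>x. x \<in> X \<Longrightarrow> f (\<iota> x) = g (\<iota> x)"
    "y \<in> Xb"
  shows "f y = g y"
proof (rule dcompl_extension_unique[OF assms(2,3) _ assms(4) _ assms(5) _ assms(7)])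
  show "mcp X le Z leZ (f \<circ> \<iota>)"
    using assms(1) dcompl_mcp[OF assms(2)] assms(4) by (rule mcp_comp)
qed (use assms(6) in simp_all)

lemma dcompl_endo_eq_id:
  fixes Xb :: "'d set"
  assumes "poset X le" "dcompl TYPE('d) X le Xb leb \<iota>"
    "mcp Xb leb Xb leb f" "\<And>x. x \<in> X \<Longrightarrow> f (\<iota> x) = \<iota> x" "y \<in> Xb"
  shows "f y = y"
  by (rule dcompl_eq_on_image[OF assms(1,2) dcompl_dcpo[OF assms(2)] assms(3) mcp_id])
    (use assms(4,5) in simp_all)

text \<open>The closure of \<open>\<iota> ` X\<close> is itself a dcpo receiving \<open>\<iota>\<close>; the extension of \<open>\<iota>\<close> into it
  is the identity on \<open>Xb\<close>, which therefore lies in the closure.\<close>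

lemma dcompl_dense:
  fixes Xb :: "'d set"
  assumes "poset X le" "dcompl TYPE('d) X le Xb leb \<iota>"
  shows "dclosure Xb leb (\<iota> ` X) = Xb"
proof -
  let ?B = "dclosure Xb leb (\<iota> ` X)"
  have dc: "dcpo Xb leb" and mi: "mcp X le Xb leb \<iota>"
    using dcompl_dcpo[OF assms(2)] dcompl_mcp[OF assms(2)] .
  have iX: "\<iota> ` X \<subseteq> Xb" using mcp_mem[OF mi] by blast
  have B: "dsup_closed Xb leb ?B" using iX by (rule dsup_closed_dclosure)
  have "mcp X le ?B leb \<iota>"
    using mi dclosure_subset[of "\<iota> ` X" Xb leb] dclosure_subset_carrier[OF iX]
    by (rule mcp_restrict_codomain)
  then obtain T where T: "mcp Xb leb ?B leb T" "\<And>x. x \<in> X \<Longrightarrow> T (\<iota> x) = \<iota> x"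
    using dcompl_extension[OF assms(2) dcpo_dsup_closed[OF dc B]] by blast
  have "mcp Xb leb Xb leb ((\<lambda>y. y) \<circ> T)"
    using mcp_comp[OF dcpo_poset[OF dc] T(1) mcp_dsup_closed_inclusion[OF dc B]] .
  then have "((\<lambda>y. y) \<circ> T) y = y" if "y \<in> Xb" for y
    by (rule dcompl_endo_eq_id[OF assms]) (use T(2) that in simp_all)
  then have "Xb \<subseteq> ?B" using mcp_mem[OF T(1)] by (metis comp_apply subsetI)
  then show ?thesis using dclosure_subset_carrier[OF iX] by blast
qed

lemma dcompl_is_tip:
  fixes Xb :: "'d set"
  assumes "poset X le" "dcompl TYPE('d) X le Xb leb \<iota>" "x \<in> Xb"
  shows "is_tip Xb leb (\<iota> ` X \<inter> down Xb leb {x}) x"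
proof -
  have pXb: "poset Xb leb" using dcpo_poset[OF dcompl_dcpo[OF assms(2)]] .
  have iX: "\<iota> ` X \<subseteq> Xb" using mcp_mem[OF dcompl_mcp[OF assms(2)]] by blast
  have "x \<in> dclosure Xb leb (\<iota> ` X \<inter> down Xb leb {x})"
  proof (rule mem_dclosure_monotone_family[where A = "\<iota> ` X"])
    show "x \<in> dclosure Xb leb (\<iota> ` X)" using dcompl_dense[OF assms(1,2)] assms(3) by simp
    show "\<iota> ` X \<subseteq> Xb" by (rule iX)
    show "\<iota> ` X \<inter> down Xb leb {a} \<subseteq> Xb" for a by (auto simp: down_singleton_iff)
    show "a \<in> \<iota> ` X \<inter> down Xb leb {a}" if "a \<in> \<iota> ` X" for a
      using that iX poset_refl[OF pXb] by (auto simp: down_singleton_iff)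
    show "\<iota> ` X \<inter> down Xb leb {a} \<subseteq> \<iota> ` X \<inter> down Xb leb {b}"
      if "a \<in> Xb" "b \<in> Xb" "leb a b" for a b
    proof
      fix y assume "y \<in> \<iota> ` X \<inter> down Xb leb {a}"
      then have "y \<in> \<iota> ` X" "y \<in> Xb" "leb y a" by (auto simp: down_singleton_iff)
      moreover from this have "leb y b" using poset_trans[OF pXb _ that(1,2) _ that(3)] by blast
      ultimately show "y \<in> \<iota> ` X \<inter> down Xb leb {b}" by (auto simp: down_singleton_iff)
    qed
  qed
  then show ?thesis by (rule is_tipI_down[OF assms(3) Int_lower2])
qed

lemma dcompl_extension_is_sup:
  fixes Xb :: "'d set"
  assumes "poset X le" "dcompl TYPE('d) X le Xb leb \<iota>"
    "mcp Xb leb Z leZ Tb" "\<And>x. x \<in> X \<Longrightarrow> Tb (\<iota> x) = T x" "xb \<in> Xb"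
  shows "is_sup Z leZ {T x | x. x \<in> X \<and> leb (\<iota> x) xb} (Tb xb)"
proof -
  have iX: "\<iota> ` X \<subseteq> Xb" using mcp_mem[OF dcompl_mcp[OF assms(2)]] by blast
  have "Tb ` (\<iota> ` X \<inter> down Xb leb {xb}) = Tb ` \<iota> ` {x \<in> X. leb (\<iota> x) xb}"
    using iX by (auto simp: down_singleton_iff)
  also have "\<dots> = T ` {x \<in> X. leb (\<iota> x) xb}"
    unfolding image_image by (rule image_cong) (simp_all add: assms(4))
  also have "\<dots> = {T x | x. x \<in> X \<and> leb (\<iota> x) xb}" by blast
  finally have "Tb ` (\<iota> ` X \<inter> down Xb leb {xb}) = {T x | x. x \<in> X \<and> leb (\<iota> x) xb}" .
  moreover have "is_sup Z leZ (Tb ` (\<iota> ` X \<inter> down Xb leb {xb})) (Tb xb)"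
    using dcpo_poset[OF dcompl_dcpo[OF assms(2)]] assms(3) dcompl_is_tip[OF assms(1,2,5)]
    by (rule mcp_is_sup_tip) (auto simp: down_singleton_iff)
  ultimately show ?thesis by simp
qed

lemma dcompl_unique_iso:
  fixes Xb1 :: "'b set" and Xb2 :: "'c set"
  assumes "poset X le"
    "dcompl TYPE('b) X le Xb1 leb1 \<iota>1" "dcompl TYPE('c) X le Xb1 leb1 \<iota>1"
    "dcompl TYPE('b) X le Xb2 leb2 \<iota>2" "dcompl TYPE('c) X le Xb2 leb2 \<iota>2"
  shows "\<exists>\<phi>. order_iso Xb1 leb1 Xb2 leb2 \<phi> \<and> (\<forall>x\<in>X. \<phi> (\<iota>1 x) = \<iota>2 x)
    \<and> (\<forall>\<psi>. order_iso Xb1 leb1 Xb2 leb2 \<psi> \<and> (\<forall>x\<in>X. \<psi> (\<iota>1 x) = \<iota>2 x)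
          \<longrightarrow> (\<forall>y\<in>Xb1. \<psi> y = \<phi> y))"
proof -
  have d1: "dcpo Xb1 leb1" and m1: "mcp X le Xb1 leb1 \<iota>1"
    using dcompl_dcpo[OF assms(2)] dcompl_mcp[OF assms(2)] .
  have d2: "dcpo Xb2 leb2" and m2: "mcp X le Xb2 leb2 \<iota>2"
    using dcompl_dcpo[OF assms(4)] dcompl_mcp[OF assms(4)] .
  have p1: "poset Xb1 leb1" and p2: "poset Xb2 leb2" using dcpo_poset d1 d2 by blast+
  obtain \<phi> where \<phi>: "mcp Xb1 leb1 Xb2 leb2 \<phi>" "\<And>x. x \<in> X \<Longrightarrow> \<phi> (\<iota>1 x) = \<iota>2 x"
    using dcompl_extension[OF assms(3) d2 m2] by blast
  obtain \<chi> where \<chi>: "mcp Xb2 leb2 Xb1 leb1 \<chi>" "\<And>x. x \<in> X \<Longrightarrow> \<chi> (\<iota>2 x) = \<iota>1 x"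
    using dcompl_extension[OF assms(4) d1 m1] by blast
  have "(\<chi> \<circ> \<phi>) y = y" if "y \<in> Xb1" for y
    by (rule dcompl_endo_eq_id[OF assms(1,2) mcp_comp[OF p1 \<phi>(1) \<chi>(1)]])
      (use \<phi>(2) \<chi>(2) that in simp_all)
  moreover have "(\<phi> \<circ> \<chi>) y = y" if "y \<in> Xb2" for y
    by (rule dcompl_endo_eq_id[OF assms(1,5) mcp_comp[OF p2 \<chi>(1) \<phi>(1)]])
      (use \<phi>(2) \<chi>(2) that in simp_all)
  ultimately have iso: "order_iso Xb1 leb1 Xb2 leb2 \<phi>"
    using order_iso_mcp_inverse[OF p1 p2 \<phi>(1) \<chi>(1)] by simp
  have "\<psi> y = \<phi> y"
    if "order_iso Xb1 leb1 Xb2 leb2 \<psi>" "\<forall>x\<in>X. \<psi> (\<iota>1 x) = \<iota>2 x" "y \<in> Xb1" for \<psi> y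
    by (rule dcompl_eq_on_image[OF assms(1,3) d2 order_iso_mcp[OF that(1)] \<phi>(1)])
      (use that \<phi>(2) in simp_all)
  then show ?thesis using iso \<phi>(2) by blast
qed

lemma dcompl_has_sup:
  fixes Xb :: "'d set" and Z :: "'z set"
  assumes "poset X le" "dcompl TYPE('d) X le Xb leb \<iota>" "dcompl TYPE('z) X le Xb leb \<iota>"
    "dcpo Z leZ" "mcp X le Z leZ T" "xb \<in> Xb"
  shows "has_sup Z leZ {T x | x. x \<in> X \<and> leb (\<iota> x) xb}"
proof -
  obtain Tb where "mcp Xb leb Z leZ Tb" "\<And>x. x \<in> X \<Longrightarrow> Tb (\<iota> x) = T x"
    using dcompl_extension[OF assms(3-5)] by blast
  then show ?thesis
    unfolding has_sup_def using dcompl_extension_is_sup[OF assms(1,2) _ _ assms(6)] by blast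
qed

section \<open>The realization by lower directed-sup-closed sets\<close>

lemma realY_iff: "A \<in> realY X le \<longleftrightarrow> lower_set X le A \<and> dsup_closed X le A"
proof
  assume "A \<in> realY X le"
  then have "A \<subseteq> X" "hclosure X le A = A" unfolding realY_def by auto
  then show "lower_set X le A \<and> dsup_closed X le A"
    using lower_set_hclosure dsup_closed_hclosure by metis
next
  assume A: "lower_set X le A \<and> dsup_closed X le A"
  then have "hclosure X le A = A"
    using hclosure_minimal[of A A X le] hclosure_subset[of A X le] by blast
  then show "A \<in> realY X le" using A unfolding realY_def lower_set_def by blast
qed

lemma realY_subset: "A \<in> realY X le \<Longrightarrow> A \<subseteq> X"
  unfolding realY_def by blast

lemma mem_real_iota: "y \<in> real_iota X le x \<longleftrightarrow> y \<in> X \<and> le y x"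
  unfolding real_iota_def by (rule down_singleton_iff)

lemma self_mem_real_iota: "poset X le \<Longrightarrow> x \<in> X \<Longrightarrow> x \<in> real_iota X le x"
  by (simp add: mem_real_iota poset_refl)

lemma real_iota_mono:
  "poset X le \<Longrightarrow> x \<in> X \<Longrightarrow> y \<in> X \<Longrightarrow> le x y \<Longrightarrow> real_iota X le x \<subseteq> real_iota X le y"
  by (auto simp: mem_real_iota intro: poset_trans)

lemma real_iota_subset: "A \<in> realY X le \<Longrightarrow> x \<in> A \<Longrightarrow> real_iota X le x \<subseteq> A"
  unfolding realY_iff lower_set_def by (auto simp: mem_real_iota)

lemma real_iota_in_realY:
  assumes "poset X le" "x \<in> X"
  shows "real_iota X le x \<in> realY X le"
  unfolding realY_iff real_iota_def
  using lower_set_down_singleton[OF assms] dsup_closed_down_singleton[OF assms(2)] by (rule conjI)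

lemma real_iota_image_subset: "poset X le \<Longrightarrow> real_iota X le ` X \<subseteq> realY X le"
  by (rule image_subsetI, rule real_iota_in_realY)

lemma realY_is_sup:
  assumes "\<D> \<subseteq> realY X le"
  shows "is_sup (realY X le) (\<subseteq>) \<D> (hclosure X le (\<Union>\<D>))"
  unfolding is_sup_def
proof (intro conjI ballI impI)
  have "\<Union>\<D> \<subseteq> X" using assms realY_subset by blast
  then show "hclosure X le (\<Union>\<D>) \<in> realY X le"
    unfolding realY_iff using lower_set_hclosure dsup_closed_hclosure by blast
  show "A \<subseteq> hclosure X le (\<Union>\<D>)" if "A \<in> \<D>" for A
    using that hclosure_subset[of "\<Union>\<D>" X le] by blast
  show "hclosure X le (\<Union>\<D>) \<subseteq> u" if "u \<in> realY X le" "\<forall>A\<in>\<D>. A \<subseteq> u" for u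
    using that unfolding realY_iff by (intro hclosure_minimal) blast+
qed

lemma poset_realY: "poset (realY X le) (\<subseteq>)"
  unfolding poset_def by blast

lemma dcpo_realY: "dcpo (realY X le) (\<subseteq>)"
  unfolding dcpo_def has_sup_def using poset_realY realY_is_sup[OF directedD] by blast

lemma dsup_closed_realXb: "poset X le \<Longrightarrow> dsup_closed (realY X le) (\<subseteq>) (realXb X le)"
  unfolding realXb_def by (rule dsup_closed_dclosure[OF real_iota_image_subset])

lemma realXb_subset_realY: "poset X le \<Longrightarrow> realXb X le \<subseteq> realY X le"
  by (rule dsup_closed_subset[OF dsup_closed_realXb])

lemma dcpo_realXb: "poset X le \<Longrightarrow> dcpo (realXb X le) (\<subseteq>)"
  by (rule dcpo_dsup_closed[OF dcpo_realY dsup_closed_realXb])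

lemma real_iota_mem_realXb: "x \<in> X \<Longrightarrow> real_iota X le x \<in> realXb X le"
  unfolding realXb_def by (rule subsetD[OF dclosure_subset imageI])

lemma mcp_real_iota:
  assumes "poset X le"
  shows "mcp X le (realXb X le) (\<subseteq>) (real_iota X le)"
proof (rule mcpI)
  show "real_iota X le x \<in> realXb X le" if "x \<in> X" for x
    using that by (rule real_iota_mem_realXb)
next
  fix D s assume D: "directed X le D" "is_sup X le D s"
  have DX: "D \<subseteq> X" and sX: "s \<in> X" using directedD[OF D(1)] is_sup_mem[OF D(2)] .
  have "is_sup (realY X le) (\<subseteq>) (real_iota X le ` D) (real_iota X le s)"
    unfolding is_sup_def
  proof (intro conjI ballI impI)
    show "real_iota X le s \<in> realY X le" by (rule real_iota_in_realY[OF assms sX])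
    show "a \<subseteq> real_iota X le s" if a: "a \<in> real_iota X le ` D" for a
    proof -
      obtain d where "d \<in> D" "a = real_iota X le d" using a by blast
      then show ?thesis using DX real_iota_mono[OF assms _ sX is_sup_upper[OF D(2)]] by blast
    qed
    show "real_iota X le s \<subseteq> u" if u: "u \<in> realY X le" "\<forall>a\<in>real_iota X le ` D. a \<subseteq> u" for u
    proof -
      have "D \<subseteq> u" using u(2) DX self_mem_real_iota[OF assms] by blast
      moreover have "dsup_closed X le u" using u(1) realY_iff by blast
      ultimately have "s \<in> u" using D by (blast intro: dsup_closedD)
      then show ?thesis by (rule real_iota_subset[OF u(1)])
    qed
  qed
  then show "is_sup (realXb X le) (\<subseteq>) (real_iota X le ` D) (real_iota X le s)"
    by (rule is_sup_subset[OF _ real_iota_mem_realXb[OF sX] realXb_subset_realY[OF assms]])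
qed

text \<open>By closure induction this makes \<open>A \<mapsto> sup (T ` A)\<close> defined on all of \<open>realXb\<close>; it is the
  extension of \<open>T\<close>.\<close>

lemma is_sup_image_realY_sup:
  fixes Z :: "'z set"
  assumes "poset X le" "dcpo Z leZ" "mcp X le Z leZ T" "directed (realY X le) (\<subseteq>) \<D>"
    "\<And>A. A \<in> \<D> \<Longrightarrow> is_sup Z leZ (T ` A) (sup_of Z leZ (T ` A))"
  obtains z where "is_sup Z leZ ((\<lambda>A. sup_of Z leZ (T ` A)) ` \<D>) z"
    "is_sup Z leZ (T ` hclosure X le (\<Union>\<D>)) z"
proof -
  let ?\<sigma> = "\<lambda>A. sup_of Z leZ (T ` A)"
  have pZ: "poset Z leZ" using assms(2) by (rule dcpo_poset)
  have UX: "\<Union>\<D> \<subseteq> X" using directedD[OF assms(4)] realY_subset by blast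
  have TZ: "T ` A \<subseteq> Z" if "A \<in> \<D>" for A using that UX mcp_mem[OF assms(3)] by blast
  have "directed Z leZ (?\<sigma> ` \<D>)"
  proof (rule directed_image[OF directed_subset[OF assms(4) subset_refl]])
    show "?\<sigma> A \<in> Z" if "A \<in> \<D>" for A using assms(5)[OF that] by (rule is_sup_mem)
    show "leZ (?\<sigma> A) (?\<sigma> B)" if "A \<in> \<D>" "B \<in> \<D>" "A \<subseteq> B" for A B
      using image_mono[OF that(3)] assms(5)[OF that(1)] assms(5)[OF that(2)] by (rule is_sup_mono)
  qed
  then obtain z where z: "is_sup Z leZ (?\<sigma> ` \<D>) z"
    using dcpo_has_sup[OF assms(2)] unfolding has_sup_def by blast
  have "is_sup Z leZ (\<Union>A\<in>\<D>. T ` A) z" using pZ TZ assms(5) z by (rule is_sup_UN)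
  then have "is_sup Z leZ (T ` \<Union>\<D>) z" by (simp add: image_Union)
  then have "is_sup Z leZ (T ` hclosure X le (\<Union>\<D>)) z"
    using assms(1) pZ assms(3) UX by (intro is_sup_image_hclosure)
  with z show ?thesis by (rule that)
qed

lemma realXb_is_sup_image:
  fixes Z :: "'z set"
  assumes "poset X le" "dcpo Z leZ" "mcp X le Z leZ T" "A \<in> realXb X le"
  shows "is_sup Z leZ (T ` A) (sup_of Z leZ (T ` A))"
  using assms(4)[unfolded realXb_def] real_iota_image_subset[OF assms(1)]
proof (induction rule: dclosure_induct)
  case (base a)
  then obtain x where "x \<in> X" "a = real_iota X le x" by blast
  then show ?case
    unfolding real_iota_def using is_sup_image_down_singleton[OF assms(1,3)] by (blast intro: is_sup_sup_of)
next
  case (sup \<D> S)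
  have "S = hclosure X le (\<Union>\<D>)"
    using poset_realY sup.hyps(3) realY_is_sup[OF directedD[OF sup.hyps(1)]] by (rule is_sup_unique)
  then show ?case
    using is_sup_image_realY_sup[OF assms(1-3) sup.hyps(1) sup.IH[rule_format]] is_sup_sup_of by metis
qed

lemma sup_of_image_real_iota:
  assumes "poset X le" "poset Z leZ" "mcp X le Z leZ T" "x \<in> X"
  shows "sup_of Z leZ (T ` real_iota X le x) = T x"
  unfolding real_iota_def
  using assms(2) is_sup_image_down_singleton[OF assms(1,3,4)] by (rule sup_of_eq)

lemma mcp_realXb_extension:
  fixes Z :: "'z set"
  assumes "poset X le" "dcpo Z leZ" "mcp X le Z leZ T"
  shows "mcp (realXb X le) (\<subseteq>) Z leZ (\<lambda>A. sup_of Z leZ (T ` A))"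
proof (rule mcpI)
  show "sup_of Z leZ (T ` A) \<in> Z" if "A \<in> realXb X le" for A
    using realXb_is_sup_image[OF assms that] by (rule is_sup_mem)
next
  fix \<D> S assume \<D>: "directed (realXb X le) (\<subseteq>) \<D>" "is_sup (realXb X le) (\<subseteq>) \<D> S"
  have sub: "\<D> \<subseteq> realXb X le" using \<D>(1) by (rule directedD)
  have dY: "directed (realY X le) (\<subseteq>) \<D>"
    using \<D>(1) realXb_subset_realY[OF assms(1)] by (rule directed_superset)
  obtain S' where S': "S' \<in> realXb X le" "is_sup (realY X le) (\<subseteq>) \<D> S'"
    "is_sup (realXb X le) (\<subseteq>) \<D> S'"
    using dcpo_dsup_closed_is_sup[OF dcpo_realY dsup_closed_realXb[OF assms(1)] dY sub] by blast
  have "S = S'" using dcpo_poset[OF dcpo_realXb[OF assms(1)]] \<D>(2) S'(3) by (rule is_sup_unique)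
  moreover have "S' = hclosure X le (\<Union>\<D>)"
    using poset_realY S'(2) realY_is_sup[OF directedD[OF dY]] by (rule is_sup_unique)
  ultimately have S: "S = hclosure X le (\<Union>\<D>)" "S \<in> realXb X le" using S'(1) by simp_all
  obtain z where z: "is_sup Z leZ ((\<lambda>A. sup_of Z leZ (T ` A)) ` \<D>) z"
      "is_sup Z leZ (T ` hclosure X le (\<Union>\<D>)) z"
    using is_sup_image_realY_sup[OF assms dY realXb_is_sup_image[OF assms]] sub by blast
  have "sup_of Z leZ (T ` S) = z" using S z(2) sup_of_eq[OF dcpo_poset[OF assms(2)]] by simp
  then show "is_sup Z leZ ((\<lambda>A. sup_of Z leZ (T ` A)) ` \<D>) (sup_of Z leZ (T ` S))" using z(1) by simp
qed

lemma dcompl_realXb: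
  assumes "poset X le"
  shows "dcompl TYPE('z) X le (realXb X le) (\<subseteq>) (real_iota X le)"
  unfolding dcompl_def
proof (intro conjI allI impI)
  show "dcpo (realXb X le) (\<subseteq>)" using assms by (rule dcpo_realXb)
  show "mcp X le (realXb X le) (\<subseteq>) (real_iota X le)" using assms by (rule mcp_real_iota)
  fix Z :: "'z set" and leZ T assume ZT: "dcpo Z leZ \<and> mcp X le Z leZ T"
  let ?Tb = "\<lambda>A. sup_of Z leZ (T ` A)"
  have mTb: "mcp (realXb X le) (\<subseteq>) Z leZ ?Tb"
    using assms ZT by (blast intro: mcp_realXb_extension)
  have ext: "\<forall>x\<in>X. ?Tb (real_iota X le x) = T x"
    using assms ZT by (blast intro: sup_of_image_real_iota dcpo_poset)
  have "Tb' y = ?Tb y"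
    if "mcp (realXb X le) (\<subseteq>) Z leZ Tb'" "\<forall>x\<in>X. Tb' (real_iota X le x) = T x" "y \<in> realXb X le"
    for Tb' y
    using dcpo_poset[OF conjunct1[OF ZT]] dsup_closed_realXb[OF assms] _ that(1) mTb _
      that(3)[unfolded realXb_def]
    by (rule mcp_eq_on_dclosure) (use ext that(2) real_iota_mem_realXb in auto)
  with mTb ext show "\<exists>Tb. mcp (realXb X le) (\<subseteq>) Z leZ Tb \<and> (\<forall>x\<in>X. Tb (real_iota X le x) = T x) \<and>
      (\<forall>Tb'. mcp (realXb X le) (\<subseteq>) Z leZ Tb' \<and> (\<forall>x\<in>X. Tb' (real_iota X le x) = T x)
        \<longrightarrow> (\<forall>y\<in>realXb X le. Tb' y = Tb y))"
    by blast
qed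

lemma dclosure_real_iota_image_below:
  assumes "poset X le" "A \<in> realY X le"
  shows "dclosure (realY X le) (\<subseteq>) (real_iota X le ` A) \<subseteq> down (realY X le) (\<subseteq>) {A}"
proof (rule dclosure_minimal)
  show "real_iota X le ` A \<subseteq> down (realY X le) (\<subseteq>) {A}"
    using real_iota_in_realY[OF assms(1)] realY_subset[OF assms(2)] real_iota_subset[OF assms(2)]
    by (auto simp: down_singleton_iff)
  show "dsup_closed (realY X le) (\<subseteq>) (down (realY X le) (\<subseteq>) {A})"
    using assms(2) by (rule dsup_closed_down_singleton)
qed

lemma realXb_mem_dclosure_real_iota_image:
  assumes "poset X le" "A \<in> realXb X le"
  shows "A \<in> dclosure (realY X le) (\<subseteq>) (real_iota X le ` A)"
  using assms(2)[unfolded realXb_def] real_iota_image_subset[OF assms(1)]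
proof (rule mem_dclosure_monotone_family)
  show "real_iota X le ` B \<subseteq> realY X le" if "B \<in> realY X le" for B
    using real_iota_image_subset[OF assms(1)] realY_subset[OF that] by blast
  show "a \<in> real_iota X le ` a" if "a \<in> real_iota X le ` X" for a
    using that self_mem_real_iota[OF assms(1)] by blast
qed blast

lemma realXb_iff_has_tip:
  assumes "poset X le" "A \<in> realY X le"
  shows "(A \<in> realXb X le \<longleftrightarrow> has_tip (realY X le) (\<subseteq>) (real_iota X le ` A))
    \<and> (A \<in> realXb X le \<longrightarrow> is_tip (realY X le) (\<subseteq>) (real_iota X le ` A) A)"
proof -
  let ?C = "dclosure (realY X le) (\<subseteq>) (real_iota X le ` A)"
  have below: "B \<subseteq> A" if "B \<in> ?C" for B
    using subsetD[OF dclosure_real_iota_image_below[OF assms] that] by (simp add: down_singleton_iff)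
  have tip: "is_tip (realY X le) (\<subseteq>) (real_iota X le ` A) A" if "A \<in> realXb X le"
    unfolding is_tip_def
  proof
    show "A \<in> ?C" using assms(1) that by (rule realXb_mem_dclosure_real_iota_image)
    show "\<forall>B\<in>?C. B \<subseteq> A" using below by blast
  qed
  have "A \<in> realXb X le" if "is_tip (realY X le) (\<subseteq>) (real_iota X le ` A) t" for t
  proof -
    have t: "t \<in> ?C" "\<And>B. B \<in> ?C \<Longrightarrow> B \<subseteq> t" using that unfolding is_tip_def by blast+
    have "A \<subseteq> t"
    proof
      fix a assume a: "a \<in> A"
      then have "real_iota X le a \<in> ?C" using dclosure_subset[of "real_iota X le ` A"] by blast
      then show "a \<in> t"
        using t(2) self_mem_real_iota[OF assms(1)] realY_subset[OF assms(2)] a by blast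
    qed
    moreover have "t \<subseteq> A" using t(1) by (rule below)
    moreover have "?C \<subseteq> realXb X le"
      unfolding realXb_def
      by (rule dclosure_mono[OF image_mono[OF realY_subset[OF assms(2)]]
            real_iota_image_subset[OF assms(1)]])
    ultimately show ?thesis using t(1) by (metis subset_antisym subsetD)
  qed
  with tip show ?thesis unfolding has_tip_def by blast
qed

theorem mainTheorem1:
  fixes X :: "'a set" and le :: "'a \<Rightarrow> 'a \<Rightarrow> bool"
  assumes "poset X le"
  shows
    \<comment> \<open>existence, via the explicit realization (iii)\<close>
    "dcompl TYPE('z) X le (realXb X le) (\<subseteq>) (real_iota X le)
   \<and> (\<forall>A\<in>realY X le.
        (A \<in> realXb X le \<longleftrightarrow> has_tip (realY X le) (\<subseteq>) (real_iota X le ` A))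
      \<and> (A \<in> realXb X le \<longrightarrow> is_tip (realY X le) (\<subseteq>) (real_iota X le ` A) A))
    \<comment> \<open>uniqueness up to unique isomorphism\<close>
   \<and> (\<forall>(Xb1::'b set) leb1 \<iota>1 (Xb2::'c set) leb2 \<iota>2.
        dcompl TYPE('b) X le Xb1 leb1 \<iota>1 \<and> dcompl TYPE('c) X le Xb1 leb1 \<iota>1
      \<and> dcompl TYPE('b) X le Xb2 leb2 \<iota>2 \<and> dcompl TYPE('c) X le Xb2 leb2 \<iota>2
      \<longrightarrow> (\<exists>\<phi>. order_iso Xb1 leb1 Xb2 leb2 \<phi> \<and> (\<forall>x\<in>X. \<phi> (\<iota>1 x) = \<iota>2 x)
             \<and> (\<forall>\<psi>. order_iso Xb1 leb1 Xb2 leb2 \<psi> \<and> (\<forall>x\<in>X. \<psi> (\<iota>1 x) = \<iota>2 x)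
                    \<longrightarrow> (\<forall>y\<in>Xb1. \<psi> y = \<phi> y))))
    \<comment> \<open>(i)\<close>
   \<and> (\<forall>(Xb::'d set) leb \<iota>.
        dcompl TYPE('d) X le Xb leb \<iota> \<and> dcompl TYPE('a set set) X le Xb leb \<iota>
      \<longrightarrow> (\<forall>x\<in>Xb. is_tip Xb leb (\<iota> ` X \<inter> down Xb leb {x}) x))
    \<comment> \<open>(ii)\<close>
   \<and> (\<forall>(Xb::'d set) leb \<iota> (Z::'z set) leZ T.
        dcompl TYPE('d) X le Xb leb \<iota> \<and> dcompl TYPE('a set set) X le Xb leb \<iota>
      \<and> dcompl TYPE('z) X le Xb leb \<iota> \<and> dcpo Z leZ \<and> mcp X le Z leZ T
      \<longrightarrow> (\<forall>xb\<in>Xb. has_sup Z leZ {T x | x. x \<in> X \<and> leb (\<iota> x) xb})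
        \<and> (\<forall>Tb. mcp Xb leb Z leZ Tb \<and> (\<forall>x\<in>X. Tb (\<iota> x) = T x)
              \<longrightarrow> (\<forall>xb\<in>Xb. is_sup Z leZ {T x | x. x \<in> X \<and> leb (\<iota> x) xb} (Tb xb))))"
proof (intro conjI ballI allI impI; (elim conjE)?)
  show "dcompl TYPE('z) X le (realXb X le) (\<subseteq>) (real_iota X le)"
    using assms by (rule dcompl_realXb)
qed (simp_all add: realXb_iff_has_tip[OF assms] dcompl_unique_iso[OF assms] dcompl_is_tip[OF assms]
    dcompl_has_sup[OF assms] dcompl_extension_is_sup[OF assms])

end
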